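(* Let $\Sigma$ be a set of events and $E \subseteq \Sigma$. For all sets $S_1, S_2$ of trace sets over $\Sigma$, $$\Big(\bigcup S_1\Big) \parallel_E \Big(\bigcup S_2\Big) \;=\; \bigcup_{T_1 \in S_1,\ T_2 \in S_2} T_1 \parallel_E T_2 .$$
   Context: A trace is a finite (possibly empty) sequence of events from $\Sigma$; $\Sigma^*$ is the set of traces, $\varepsilon$ the empty trace, and $st$ the concatenation of $s$ and $t$. A trace set is a prefix-closed subset of $\Sigma^*$ (the empty set is allowed). For a trace set $T$ and $e \in \Sigma$ define $eT := \{\varepsilon\} \cup \{et \mid t \in T\}$ and $T(e) := \{t \mid et \in T\}$. For $E \subseteq \Sigma$, the binary operation $\parallel_E$ on trace sets is the unique function satisfying: $\varnothing \parallel_E T = T \parallel_E \varnothing = \varnothing$ for every trace set $T$, and, for nonempty trace sets $T_1, T_2$, $$T_1 \parallel_E T_2 = \bigcup_{e \in E} e\big(T_1(e) \parallel_E T_2(e)\big) \cup \bigcup_{e \in \Sigma \setminus E}\Big( e\big(T_1(e) \parallel_E T_2\big) \cup e\big(T_1 \parallel_E T_2(e)\big)\Big).$$ *)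

theory Defs
  imports Main
begin

text \<open>Events are elements of the type 'a (playing the role of Sigma); traces are lists.\<close>

definition trace_set :: "'a list set \<Rightarrow> bool" where
  "trace_set T \<longleftrightarrow> (\<forall>s t. s @ t \<in> T \<longrightarrow> s \<in> T)"

definition ev_prefix :: "'a \<Rightarrow> 'a list set \<Rightarrow> 'a list set" where
  "ev_prefix e T = insert [] ((\<lambda>t. e # t) ` T)"

definition after :: "'a list set \<Rightarrow> 'a \<Rightarrow> 'a list set" where
  "after T e = {t. e # t \<in> T}"

definition par_eqs :: "'a set \<Rightarrow> ('a list set \<Rightarrow> 'a list set \<Rightarrow> 'a list set) \<Rightarrow> bool" where
  "par_eqs E f \<longleftrightarrow>
     (\<forall>T. f {} T = {} \<and> f T {} = {}) \<and>
     (\<forall>T1 T2. T1 \<noteq> {} \<longrightarrow> T2 \<noteq> {} \<longrightarrow>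
        f T1 T2 = (\<Union>e\<in>E. ev_prefix e (f (after T1 e) (after T2 e)))
                  \<union> (\<Union>e\<in>-E. ev_prefix e (f (after T1 e) T2) \<union> ev_prefix e (f T1 (after T2 e))))"

definition par :: "'a set \<Rightarrow> 'a list set \<Rightarrow> 'a list set \<Rightarrow> 'a list set" where
  "par E = (THE f. par_eqs E f)"

end

theory Submission
  imports Defs
begin

text \<open>Membership of a trace in a parallel composition is decided by peeling off the trace
  event by event, so the defining equations have exactly one solution, characterised by the
  recursive predicate \<open>in_par\<close>. This predicate commutes with unions in each argument, since taking derivatives
  \<open>after T e\<close> does.\<close>

fun in_par :: "'a set \<Rightarrow> 'a list set \<Rightarrow> 'a list set \<Rightarrow> 'a list \<Rightarrow> bool" where
  "in_par E T1 T2 [] \<longleftrightarrow> T1 \<noteq> {} \<and> T2 \<noteq> {}"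
| "in_par E T1 T2 (e # t) \<longleftrightarrow>
     (if e \<in> E then in_par E (after T1 e) (after T2 e) t
      else in_par E (after T1 e) T2 t \<or> in_par E T1 (after T2 e) t)"

lemma after_empty: "after {} e = {}"
  unfolding after_def by simp

lemma after_Union: "after (\<Union>S) e = (\<Union>T\<in>S. after T e)"
  unfolding after_def by auto

lemma in_par_imp_nonempty: "in_par E T1 T2 t \<Longrightarrow> T1 \<noteq> {} \<and> T2 \<noteq> {}"
proof (induction t arbitrary: T1 T2)
  case (Cons e t)
  then show ?case
    by (metis after_empty in_par.simps(2))
qed simp

lemma par_eqs_unfold:
  assumes "par_eqs E f" "T1 \<noteq> {}" "T2 \<noteq> {}"
  shows "f T1 T2 = (\<Union>e\<in>E. ev_prefix e (f (after T1 e) (after T2 e)))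
                  \<union> (\<Union>e\<in>-E. ev_prefix e (f (after T1 e) T2) \<union> ev_prefix e (f T1 (after T2 e)))"
  using assms unfolding par_eqs_def by blast

lemma Nil_mem_par_eqs:
  assumes "par_eqs E f" "T1 \<noteq> {}" "T2 \<noteq> {}"
  shows "[] \<in> f T1 T2"
proof -
  \<comment> \<open>\<open>[]\<close> lies in every \<open>ev_prefix e _\<close>; some event \<open>e\<close> exists because types are nonempty.\<close>
  obtain e :: 'a where True by blast
  then show ?thesis
    using par_eqs_unfold[OF assms] by (cases "e \<in> E") (auto simp: ev_prefix_def)
qed

lemma Cons_mem_par_eqs_iff:
  assumes "par_eqs E f" "T1 \<noteq> {}" "T2 \<noteq> {}"
  shows "e # t \<in> f T1 T2 \<longleftrightarrow>
    (if e \<in> E then t \<in> f (after T1 e) (after T2 e)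
     else t \<in> f (after T1 e) T2 \<or> t \<in> f T1 (after T2 e))"
  using par_eqs_unfold[OF assms] by (auto simp: ev_prefix_def)

lemma mem_par_eqs_iff_in_par:
  assumes "par_eqs E f"
  shows "t \<in> f T1 T2 \<longleftrightarrow> in_par E T1 T2 t"
proof (induction t arbitrary: T1 T2)
  case Nil
  show ?case
  proof (cases "T1 = {} \<or> T2 = {}")
    case True
    then show ?thesis using assms unfolding par_eqs_def by auto
  next
    case False
    then show ?thesis using Nil_mem_par_eqs[OF assms] by simp
  qed
next
  case (Cons e t)
  show ?case
  proof (cases "T1 = {} \<or> T2 = {}")
    case True
    then show ?thesis
      using assms in_par_imp_nonempty[of E T1 T2 "e # t"] unfolding par_eqs_def by auto
  next
    case False
    then show ?thesis
      using Cons_mem_par_eqs_iff[OF assms] Cons.IH by simp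
  qed
qed

lemma par_eqs_in_par: "par_eqs E (\<lambda>T1 T2. {t. in_par E T1 T2 t})"
  unfolding par_eqs_def
proof (intro conjI allI impI)
  fix T :: "'a list set"
  show "{t. in_par E {} T t} = {}" "{t. in_par E T {} t} = {}"
    using in_par_imp_nonempty by blast+
next
  fix T1 T2 :: "'a list set"
  assume ne: "T1 \<noteq> {}" "T2 \<noteq> {}"
  obtain e0 :: 'a where True by blast
  show "{t. in_par E T1 T2 t} =
    (\<Union>e\<in>E. ev_prefix e {t. in_par E (after T1 e) (after T2 e) t}) \<union>
    (\<Union>e\<in>-E. ev_prefix e {t. in_par E (after T1 e) T2 t} \<union> ev_prefix e {t. in_par E T1 (after T2 e) t})"
    (is "?L = ?R")
  proof (rule set_eqI)
    fix t
    show "t \<in> ?L \<longleftrightarrow> t \<in> ?R"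
      using ne by (cases t; cases "e0 \<in> E") (auto simp: ev_prefix_def)
  qed
qed

lemma par_eq_in_par: "par E = (\<lambda>T1 T2. {t. in_par E T1 T2 t})"
  unfolding par_def
proof (rule the_equality)
  show "par_eqs E (\<lambda>T1 T2. {t. in_par E T1 T2 t})" by (rule par_eqs_in_par)
next
  fix f assume "par_eqs E f"
  then show "f = (\<lambda>T1 T2. {t. in_par E T1 T2 t})"
    using mem_par_eqs_iff_in_par by blast
qed

lemma in_par_Union:
  "in_par E (\<Union>S1) (\<Union>S2) t \<longleftrightarrow> (\<exists>T1\<in>S1. \<exists>T2\<in>S2. in_par E T1 T2 t)"
proof (induction t arbitrary: S1 S2)
  case (Cons e t)
  let ?d = "\<lambda>T. after T e"
  have "in_par E (\<Union>(?d ` S1)) (\<Union>(?d ` S2)) t \<longleftrightarrow> (\<exists>T1\<in>S1. \<exists>T2\<in>S2. in_par E (?d T1) (?d T2) t)"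
    "in_par E (\<Union>(?d ` S1)) (\<Union>S2) t \<longleftrightarrow> (\<exists>T1\<in>S1. \<exists>T2\<in>S2. in_par E (?d T1) T2 t)"
    "in_par E (\<Union>S1) (\<Union>(?d ` S2)) t \<longleftrightarrow> (\<exists>T1\<in>S1. \<exists>T2\<in>S2. in_par E T1 (?d T2) t)"
    using Cons.IH by auto
  then show ?case by (auto simp: after_Union)
qed auto

theorem lemma1:
  fixes E :: "'a set" and S1 S2 :: "'a list set set"
  assumes "\<forall>T\<in>S1. trace_set T" and "\<forall>T\<in>S2. trace_set T"
  shows "par E (\<Union>S1) (\<Union>S2) = (\<Union>T1\<in>S1. \<Union>T2\<in>S2. par E T1 T2)"
  unfolding par_eq_in_par by (simp add: set_eq_iff in_par_Union)

end
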